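(* If a (possibly randomized) adversarial no-regret algorithm satisfies $R_i(T)\le B$ with probability $1-\delta$ against any adversary, then with probability $1-\delta$ it also satisfies $R_i(t)\le B$ simultaneously for all $t\le T$, against any adversary.
   Context: Online learning: at each timestep $t$ the learner picks a strategy $\mathbf{x}^t$ from a compact convex set $\mathcal{X}\subset\mathbb{R}^m$ (or an action sampled from it) and an adaptive adversary picks a bounded linear utility vector $\mathbf{u}^t$. $R_i(t)$ denotes the learner's regret after the first $t$ timesteps, i.e. $\max_{\mathbf{x}\in\mathcal{X}}\sum_{\tau=1}^t\langle\mathbf{u}^\tau,\mathbf{x}-\mathbf{x}^\tau\rangle$ (or its realized-action analogue). The adversary is allowed to choose the zero utility vector. *)

theory Defs
  imports "HOL-Probability.Probability"
begin

text \<open>The learner's randomness is a seed w drawn once from a probability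
space.\<close>

fun play :: "('w \<Rightarrow> 'v list \<Rightarrow> 'v) \<Rightarrow> ('v list \<Rightarrow> 'v) \<Rightarrow> 'w \<Rightarrow> nat \<Rightarrow> ('v \<times> 'v) list" where
  "play L A w 0 = []"
| "play L A w (Suc t) =
     (let h = play L A w t in h @ [(L w (map snd h), A (map fst h))])"

definition regret :: "('v::real_inner) set \<Rightarrow> ('v \<times> 'v) list \<Rightarrow> real" where
  "regret X h = (SUP x\<in>X. (\<Sum>p\<leftarrow>h. inner (snd p) (x - fst p)))"

end

theory Submission
  imports Defs
begin

text \<open>Given an adversary A, let the stopped adversary play like A until the first round
at which the regret exceeds B, and play the zero utility vector from then on. Zero utilities
leave the regret unchanged, so whenever the regret of A exceeds B at some t \<le> T, the
stopped adversary has regret above B at time T; the guarantee at time T against the stopped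
adversary is therefore a guarantee for all t \<le> T against A. The stopped adversary only
sees the learner's outputs, but it can replay A on them to reconstruct the history.\<close>

lemma length_play [simp]: "length (play L A w t) = t"
  by (induction t) (simp_all add: Let_def)

lemma take_play: "i \<le> j \<Longrightarrow> take i (play L A w j) = play L A w i"
proof (induction j)
  case (Suc j)
  then show ?case
    by (cases "i = Suc j") (simp del: play.simps(2), simp add: Let_def)
qed simp

lemma nth_play:
  "m < j \<Longrightarrow> play L A w j ! m = (L w (map snd (play L A w m)), A (map fst (play L A w m)))"
  by (induction j) (auto simp: Let_def nth_append less_Suc_eq)

definition replay :: "('v list \<Rightarrow> 'v) \<Rightarrow> 'v list \<Rightarrow> nat \<Rightarrow> ('v \<times> 'v) list" where
  "replay A xs i = zip (take i xs) (map (\<lambda>m. A (take m xs)) [0..<i])"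

lemma replay_take: "replay A (take i xs) i = replay A xs i"
proof -
  have "map (\<lambda>m. A (take (min m i) xs)) [0..<i] = map (\<lambda>m. A (take m xs)) [0..<i]"
    by (rule map_cong) (auto simp: min_def)
  then show ?thesis
    by (simp only: replay_def take_take min.idem)
qed

lemma replay_play: "replay A (map fst (play L A w i)) i = play L A w i"
  by (rule nth_equalityI) (simp_all add: replay_def nth_play take_map take_play)

lemma replay_prefix_play:
  "take i xs = map fst (play L A w i) \<Longrightarrow> replay A xs i = play L A w i"
  by (metis replay_take replay_play)

definition stopped_adversary ::
    "(('v \<times> 'v) list \<Rightarrow> bool) \<Rightarrow> ('v list \<Rightarrow> 'v::zero) \<Rightarrow> 'v list \<Rightarrow> 'v" where
  "stopped_adversary P A xs = (if \<exists>k\<le>length xs. P (replay A xs k) then 0 else A xs)"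

lemma play_stopped_adversary_before_stop:
  assumes "\<forall>i<k. \<not> P (play L A w i)"
  shows "play L (stopped_adversary P A) w k = play L A w k"
  using assms
proof (induction k)
  case (Suc k)
  then have same: "play L (stopped_adversary P A) w k = play L A w k"
    by simp
  have "\<not> P (replay A (map fst (play L A w k)) i)" if "i \<le> k" for i
  proof -
    have "take i (map fst (play L A w k)) = map fst (play L A w i)"
      using that by (simp add: take_map take_play)
    then show ?thesis
      using that Suc.prems by (simp add: replay_prefix_play)
  qed
  then have "stopped_adversary P A (map fst (play L A w k)) = A (map fst (play L A w k))"
    unfolding stopped_adversary_def by auto
  then show ?case
    using same by (simp add: Let_def)
qed simp

lemma snd_play_stopped_adversary_after_stop:
  assumes stop: "P (play L A w k)" and before: "\<forall>i<k. \<not> P (play L A w i)"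
    and "p \<in> set (drop k (play L (stopped_adversary P A) w j))"
  shows "snd p = 0"
proof -
  let ?A' = "stopped_adversary P A"
  obtain i where "i < j - k" and p: "p = play L ?A' w j ! (k + i)"
    using assms(3) by (auto simp: in_set_conv_nth)
  define m where "m = k + i"
  have m: "k \<le> m" "m < j"
    using \<open>i < j - k\<close> by (simp_all add: m_def)
  have "take k (map fst (play L ?A' w m)) = map fst (play L A w k)"
    using m play_stopped_adversary_before_stop[OF before] by (simp add: take_map take_play)
  then have "P (replay A (map fst (play L ?A' w m)) k)"
    using stop by (simp add: replay_prefix_play)
  then show ?thesis
    using m p by (auto simp: m_def nth_play stopped_adversary_def)
qed

lemma stopped_adversary_detects_violation:
  assumes "t \<le> T" and "P (play L A w t)"
    and P_append_zero: "\<And>h zs. P h \<Longrightarrow> \<forall>p\<in>set zs. snd p = 0 \<Longrightarrow> P (h @ zs)"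
  shows "P (play L (stopped_adversary P A) w T)"
proof -
  let ?A' = "stopped_adversary P A"
  define k where "k = (LEAST k. P (play L A w k))"
  have stop: "P (play L A w k)"
    unfolding k_def by (rule LeastI) fact
  have "k \<le> T"
    using \<open>t \<le> T\<close> Least_le[of "\<lambda>k. P (play L A w k)", OF assms(2)] k_def by simp
  have before: "\<forall>i<k. \<not> P (play L A w i)"
    unfolding k_def using not_less_Least by blast
  have "play L ?A' w T = play L A w k @ drop k (play L ?A' w T)"
    using \<open>k \<le> T\<close> take_play[of k T L ?A' w] play_stopped_adversary_before_stop[OF before]
    by (metis append_take_drop_id)
  then show ?thesis
    using P_append_zero[OF stop] snd_play_stopped_adversary_after_stop[OF stop before] by metis
qed

lemma regret_append_zero_utilities:
  "\<forall>p\<in>set zs. snd p = 0 \<Longrightarrow> regret X (h @ zs) = regret X h"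
  by (simp add: regret_def cong: map_cong)

theorem proposition3p1:
  fixes X U :: "(real^'m) set"
    and M :: "'w measure"
    and L :: "'w \<Rightarrow> (real^'m) list \<Rightarrow> real^'m"
    and B \<delta> :: real
    and T :: nat
  assumes "prob_space M"
    and "compact X" and "convex X" and "X \<noteq> {}"
    and "bounded U" and "0 \<in> U"
    and "\<forall>w\<in>space M. \<forall>us. L w us \<in> X"
    and "\<forall>A. (\<forall>xs. A xs \<in> U) \<longrightarrow>
           (\<exists>E\<in>sets M. measure M E \<ge> 1 - \<delta> \<and>
              (\<forall>w\<in>E. regret X (play L A w T) \<le> B))"
  shows "\<forall>A. (\<forall>xs. A xs \<in> U) \<longrightarrow>
           (\<exists>E\<in>sets M. measure M E \<ge> 1 - \<delta> \<and>
              (\<forall>w\<in>E. \<forall>t\<in>{1..T}. regret X (play L A w t) \<le> B))"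
proof (intro allI impI)
  fix A :: "(real^'m) list \<Rightarrow> real^'m"
  assume "\<forall>xs. A xs \<in> U"
  define P where "P h \<longleftrightarrow> B < regret X h" for h :: "((real^'m) \<times> (real^'m)) list"
  have "\<forall>xs. stopped_adversary P A xs \<in> U"
    using \<open>\<forall>xs. A xs \<in> U\<close> \<open>0 \<in> U\<close> by (simp add: stopped_adversary_def)
  then obtain E where "E \<in> sets M" "measure M E \<ge> 1 - \<delta>"
    and E: "\<forall>w\<in>E. \<not> P (play L (stopped_adversary P A) w T)"
    using assms(8) unfolding P_def by (meson not_le)
  moreover have "regret X (play L A w t) \<le> B" if "w \<in> E" "t \<in> {1..T}" for w t
    using that E stopped_adversary_detects_violation[of t T P L A w]
    by (force simp: P_def regret_append_zero_utilities)
  ultimately show "\<exists>E\<in>sets M. measure M E \<ge> 1 - \<delta> \<and>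
              (\<forall>w\<in>E. \<forall>t\<in>{1..T}. regret X (play L A w t) \<le> B)"
    by blast
qed

end
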